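(* Let $\Theta$ be a variety, $H\in\Theta$, $X\in\Gamma^0$, and let $s:W(X^0)\to W(X)$ be a special homomorphism. Then for every $X$-type $T$ we have $T^{L_0}_H=(s_*T)^L_H$, where $s_*T=\{s_*u\mid u\in T\}$.
   Context: Setting: variety $\Theta$, infinite variable set $X^0$, $\Gamma^0$ its finite subsets, $W(X)$ free $\Theta$-algebras, points $\mu:W(X)\to H$. $\Phi(X^0)$ is the one-sorted algebra of first-order formulas (modulo logical equivalence) over variables $X^0$ built from equalities $w\equiv w'$, $w,w'\in W(X^0)$; $Val^{X^0}_H(u)$ is the set of $\eta:W(X^0)\to H$ satisfying $u$. For $X\in\Gamma^0$, $\Phi(X)$ is the $X$-sort of the multi-sorted algebra of formulas over $\Theta$ with valuation $Val^X_H$, $LKer(\mu)=\{u\in\Phi(X):\mu\in Val^X_H(u)\}$, and for $T\subset\Phi(X)$, $T^L_H=\{\mu\mid T\subset LKer(\mu)\}$. A special homomorphism $s:W(X^0)\to W(X)$ satisfies $s(x)=x$ for $x\in X$; it induces $s_*:\Phi(X^0)\to\Phi(X)$ with $Val^X_H(s_*u)=\{\mu\mid\mu s\in Val^{X^0}_H(u)\}$. For $X=\{x_1,\dots,x_n\}$ a formula is $X$-special if its free variables lie in $X$ and its bound variables in $X^0\setminus X$; an $X$-type is a set of $X$-special formulas consistent with the elementary theory of $H$. $Tp^H(\mu)$ (with $a_i=\mu(x_i)$) is the set of $X$-special $u(x_1,\dots,x_n;y_1,\dots,y_m)$ with $u(a_1,\dots,a_n;y_1,\dots,y_m)$ true in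 $H$. For an $X$-type $T$, $T^{L_0}_H=\{\mu:W(X)\to H\mid T\subset Tp^H(\mu)\}$. *)

theory Defs
  imports "HOL-Library.FuncSet"
begin

section \<open>Terms over a signature (elements of the free algebras W(X), as representatives)\<close>

datatype ('f,'v) trm = Var 'v | Fn 'f "('f,'v) trm list"

fun tvars :: "('f,'v) trm \<Rightarrow> 'v set" where
  "tvars (Var v) = {v}"
| "tvars (Fn f ts) = (\<Union>t\<in>set ts. tvars t)"

fun wf_trm :: "('f \<Rightarrow> nat) \<Rightarrow> ('f,'v) trm \<Rightarrow> bool" where
  "wf_trm ar (Var v) = True"
| "wf_trm ar (Fn f ts) = (length ts = ar f \<and> (\<forall>t\<in>set ts. wf_trm ar t))"

fun eval :: "('f \<Rightarrow> 'a list \<Rightarrow> 'a) \<Rightarrow> ('v \<Rightarrow> 'a) \<Rightarrow> ('f,'v) trm \<Rightarrow> 'a" where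
  "eval I \<eta> (Var v) = \<eta> v"
| "eval I \<eta> (Fn f ts) = I f (map (eval I \<eta>) ts)"

definition is_algebra :: "('f \<Rightarrow> nat) \<Rightarrow> 'a set \<Rightarrow> ('f \<Rightarrow> 'a list \<Rightarrow> 'a) \<Rightarrow> bool" where
  "is_algebra ar A I \<longleftrightarrow>
     (\<forall>f as. length as = ar f \<longrightarrow> set as \<subseteq> A \<longrightarrow> I f as \<in> A)"

definition identities :: "('f \<Rightarrow> nat) \<Rightarrow> (('f,'v) trm \<times> ('f,'v) trm) set \<Rightarrow> bool" where
  "identities ar E \<longleftrightarrow> (\<forall>(l,r)\<in>E. wf_trm ar l \<and> wf_trm ar r)"

definition in_variety ::
  "('f \<Rightarrow> nat) \<Rightarrow> (('f,'v) trm \<times> ('f,'v) trm) set \<Rightarrow> 'a set \<Rightarrow> ('f \<Rightarrow> 'a list \<Rightarrow> 'a) \<Rightarrow> bool" where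
  "in_variety ar E A I \<longleftrightarrow> is_algebra ar A I \<and>
     (\<forall>(l,r)\<in>E. \<forall>\<eta>. (\<forall>v. \<eta> v \<in> A) \<longrightarrow> eval I \<eta> l = eval I \<eta> r)"

datatype ('f,'v) fm =
    Eq "('f,'v) trm" "('f,'v) trm"
  | Neg "('f,'v) fm"
  | Conj "('f,'v) fm" "('f,'v) fm"
  | Ex 'v "('f,'v) fm"

fun sat :: "'a set \<Rightarrow> ('f \<Rightarrow> 'a list \<Rightarrow> 'a) \<Rightarrow> ('v \<Rightarrow> 'a) \<Rightarrow> ('f,'v) fm \<Rightarrow> bool" where
  "sat A I \<eta> (Eq s t) = (eval I \<eta> s = eval I \<eta> t)"
| "sat A I \<eta> (Neg u) = (\<not> sat A I \<eta> u)"
| "sat A I \<eta> (Conj u v) = (sat A I \<eta> u \<and> sat A I \<eta> v)"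
| "sat A I \<eta> (Ex x u) = (\<exists>a\<in>A. sat A I (\<eta>(x := a)) u)"

fun wf_fm :: "('f \<Rightarrow> nat) \<Rightarrow> ('f,'v) fm \<Rightarrow> bool" where
  "wf_fm ar (Eq s t) = (wf_trm ar s \<and> wf_trm ar t)"
| "wf_fm ar (Neg u) = wf_fm ar u"
| "wf_fm ar (Conj u v) = (wf_fm ar u \<and> wf_fm ar v)"
| "wf_fm ar (Ex x u) = wf_fm ar u"

fun fv :: "('f,'v) fm \<Rightarrow> 'v set" where
  "fv (Eq s t) = tvars s \<union> tvars t"
| "fv (Neg u) = fv u"
| "fv (Conj u v) = fv u \<union> fv v"
| "fv (Ex x u) = fv u - {x}"

fun bv :: "('f,'v) fm \<Rightarrow> 'v set" where
  "bv (Eq s t) = {}"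
| "bv (Neg u) = bv u"
| "bv (Conj u v) = bv u \<union> bv v"
| "bv (Ex x u) = insert x (bv u)"

text \<open>Val^{X^0}_H(u): points W(X^0) -> H, i.e. assignments of all variables into H.\<close>
definition Val0 :: "'a set \<Rightarrow> ('f \<Rightarrow> 'a list \<Rightarrow> 'a) \<Rightarrow> ('f,'v) fm \<Rightarrow> ('v \<Rightarrow> 'a) set" where
  "Val0 A I u = {\<eta>. (\<forall>v. \<eta> v \<in> A) \<and> sat A I \<eta> u}"

text \<open>A homomorphism s : W(X^0) -> W(X) is given by the images sigma v of the free
  generators; s is special iff s(x) = x for x in X.\<close>
definition special_hom :: "('f \<Rightarrow> nat) \<Rightarrow> 'v set \<Rightarrow> ('v \<Rightarrow> ('f,'v) trm) \<Rightarrow> bool" where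
  "special_hom ar X \<sigma> \<longleftrightarrow> (\<forall>v. wf_trm ar (\<sigma> v) \<and> tvars (\<sigma> v) \<subseteq> X) \<and> (\<forall>x\<in>X. \<sigma> x = Var x)"

datatype ('f,'v) mfm =
    MEq "('f,'v) trm" "('f,'v) trm"
  | MNeg "('f,'v) mfm"
  | MConj "('f,'v) mfm" "('f,'v) mfm"
  | MEx 'v "('f,'v) mfm"
  | MSpec "'v \<Rightarrow> ('f,'v) trm" "('f,'v) fm"

fun in_sort :: "('f \<Rightarrow> nat) \<Rightarrow> 'v set \<Rightarrow> ('f,'v) mfm \<Rightarrow> bool" where
  "in_sort ar X (MEq s t) = (wf_trm ar s \<and> wf_trm ar t \<and> tvars s \<subseteq> X \<and> tvars t \<subseteq> X)"
| "in_sort ar X (MNeg u) = in_sort ar X u"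
| "in_sort ar X (MConj u v) = (in_sort ar X u \<and> in_sort ar X v)"
| "in_sort ar X (MEx x u) = (x \<in> X \<and> in_sort ar X u)"
| "in_sort ar X (MSpec \<sigma> u) = (special_hom ar X \<sigma> \<and> wf_fm ar u)"

fun msat :: "'a set \<Rightarrow> ('f \<Rightarrow> 'a list \<Rightarrow> 'a) \<Rightarrow> ('v \<Rightarrow> 'a) \<Rightarrow> ('f,'v) mfm \<Rightarrow> bool" where
  "msat A I \<mu> (MEq s t) = (eval I \<mu> s = eval I \<mu> t)"
| "msat A I \<mu> (MNeg u) = (\<not> msat A I \<mu> u)"
| "msat A I \<mu> (MConj u v) = (msat A I \<mu> u \<and> msat A I \<mu> v)"
| "msat A I \<mu> (MEx x u) = (\<exists>a\<in>A. msat A I (\<mu>(x := a)) u)"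
| "msat A I \<mu> (MSpec \<sigma> u) = ((\<lambda>v. eval I \<mu> (\<sigma> v)) \<in> Val0 A I u)"

text \<open>Points mu : W(X) -> H are identified with maps X -> H (extensional).\<close>
definition ValX :: "'a set \<Rightarrow> ('f \<Rightarrow> 'a list \<Rightarrow> 'a) \<Rightarrow> 'v set \<Rightarrow> ('f,'v) mfm \<Rightarrow> ('v \<Rightarrow> 'a) set" where
  "ValX A I X \<phi> = {\<mu> \<in> X \<rightarrow>\<^sub>E A. msat A I \<mu> \<phi>}"

definition sstar :: "('v \<Rightarrow> ('f,'v) trm) \<Rightarrow> ('f,'v) fm \<Rightarrow> ('f,'v) mfm" where
  "sstar \<sigma> u = MSpec \<sigma> u"

definition LKer ::
  "('f \<Rightarrow> nat) \<Rightarrow> 'a set \<Rightarrow> ('f \<Rightarrow> 'a list \<Rightarrow> 'a) \<Rightarrow> 'v set \<Rightarrow> ('v \<Rightarrow> 'a) \<Rightarrow> ('f,'v) mfm set" where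
  "LKer ar A I X \<mu> = {\<phi>. in_sort ar X \<phi> \<and> \<mu> \<in> ValX A I X \<phi>}"

definition L_closure ::
  "('f \<Rightarrow> nat) \<Rightarrow> 'a set \<Rightarrow> ('f \<Rightarrow> 'a list \<Rightarrow> 'a) \<Rightarrow> 'v set \<Rightarrow> ('f,'v) mfm set \<Rightarrow> ('v \<Rightarrow> 'a) set" where
  "L_closure ar A I X T = {\<mu> \<in> X \<rightarrow>\<^sub>E A. T \<subseteq> LKer ar A I X \<mu>}"

definition X_special :: "('f \<Rightarrow> nat) \<Rightarrow> 'v set \<Rightarrow> ('f,'v) fm \<Rightarrow> bool" where
  "X_special ar X u \<longleftrightarrow> wf_fm ar u \<and> fv u \<subseteq> X \<and> bv u \<inter> X = {}"

text \<open>Consistency with the elementary theory of H, expressed (via compactness) as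
  finite satisfiability in H.\<close>
definition X_type ::
  "('f \<Rightarrow> nat) \<Rightarrow> 'a set \<Rightarrow> ('f \<Rightarrow> 'a list \<Rightarrow> 'a) \<Rightarrow> 'v set \<Rightarrow> ('f,'v) fm set \<Rightarrow> bool" where
  "X_type ar A I X T \<longleftrightarrow> (\<forall>u\<in>T. X_special ar X u) \<and>
     (\<forall>F. finite F \<longrightarrow> F \<subseteq> T \<longrightarrow> (\<exists>\<eta>. (\<forall>v. \<eta> v \<in> A) \<and> (\<forall>u\<in>F. sat A I \<eta> u)))"

definition Tp ::
  "('f \<Rightarrow> nat) \<Rightarrow> 'a set \<Rightarrow> ('f \<Rightarrow> 'a list \<Rightarrow> 'a) \<Rightarrow> 'v set \<Rightarrow> ('v \<Rightarrow> 'a) \<Rightarrow> ('f,'v) fm set" where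
  "Tp ar A I X \<mu> = {u. X_special ar X u \<and>
     (\<forall>\<eta>. (\<forall>v. \<eta> v \<in> A) \<longrightarrow> (\<forall>x\<in>X. \<eta> x = \<mu> x) \<longrightarrow> sat A I \<eta> u)}"

definition L0_closure ::
  "('f \<Rightarrow> nat) \<Rightarrow> 'a set \<Rightarrow> ('f \<Rightarrow> 'a list \<Rightarrow> 'a) \<Rightarrow> 'v set \<Rightarrow> ('f,'v) fm set \<Rightarrow> ('v \<Rightarrow> 'a) set" where
  "L0_closure ar A I X T = {\<mu> \<in> X \<rightarrow>\<^sub>E A. T \<subseteq> Tp ar A I X \<mu>}"

end

theory Submission
  imports Defs
begin

text \<open>A special homomorphism \<open>s\<close> fixes \<open>X\<close>, so for a point \<open>\<mu>\<close> of \<open>W(X)\<close> the point \<open>\<mu> s\<close> of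
  \<open>W(X\<^sup>0)\<close> extends \<open>\<mu>\<close>. An \<open>X\<close>-special formula depends only on the values of its free
  variables, which lie in \<open>X\<close>; hence it holds at every extension of \<open>\<mu>\<close> as soon as it holds
  at the single extension \<open>\<mu> s\<close>, i.e. \<open>u \<in> Tp\<^sup>H(\<mu>)\<close> iff \<open>\<mu> \<in> Val\<^sup>X\<^sub>H(s\<^sub>* u)\<close>.\<close>

lemma eval_closed:
  assumes "is_algebra ar A I" and "wf_trm ar t" and "tvars t \<subseteq> X" and "\<forall>x\<in>X. \<mu> x \<in> A"
  shows "eval I \<mu> t \<in> A"
  using assms(2,3)
proof (induction t)
  case (Var v)
  then show ?case using assms(4) by auto
next
  case (Fn f ts)
  then have "set (map (eval I \<mu>) ts) \<subseteq> A" by fastforce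
  with Fn.prems assms(1) show ?case by (simp add: is_algebra_def)
qed

lemma eval_cong: "\<forall>v\<in>tvars t. \<eta> v = \<eta>' v \<Longrightarrow> eval I \<eta> t = eval I \<eta>' t"
  by (induction t) (auto cong: map_cong)

lemma sat_cong: "\<forall>v\<in>fv u. \<eta> v = \<eta>' v \<Longrightarrow> sat A I \<eta> u = sat A I \<eta>' u"
proof (induction u arbitrary: \<eta> \<eta>')
  case (Eq s t)
  then show ?case using eval_cong[of s \<eta> \<eta>' I] eval_cong[of t \<eta> \<eta>' I] by auto
next
  case (Conj u w)
  then have "sat A I \<eta> u = sat A I \<eta>' u" and "sat A I \<eta> w = sat A I \<eta>' w" by auto
  then show ?case by simp
next
  case (Ex x u)
  then have "\<And>a. sat A I (\<eta>(x := a)) u = sat A I (\<eta>'(x := a)) u" by auto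
  then show ?case by simp
qed auto

lemma Tp_iff_sat_extension:
  assumes "X_special ar X u" and "\<forall>v. \<eta> v \<in> A" and "\<forall>x\<in>X. \<eta> x = \<mu> x"
  shows "u \<in> Tp ar A I X \<mu> \<longleftrightarrow> sat A I \<eta> u"
proof
  assume "u \<in> Tp ar A I X \<mu>"
  with assms(2,3) show "sat A I \<eta> u" by (simp add: Tp_def)
next
  assume sat_u: "sat A I \<eta> u"
  have "sat A I \<eta>' u" if "\<forall>x\<in>X. \<eta>' x = \<mu> x" for \<eta>'
  proof -
    have "fv u \<subseteq> X" using assms(1) by (simp add: X_special_def)
    with that assms(3) have "\<forall>v\<in>fv u. \<eta> v = \<eta>' v" by auto
    with sat_u show ?thesis using sat_cong by blast
  qed
  with assms(1) show "u \<in> Tp ar A I X \<mu>" by (simp add: Tp_def)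
qed

lemma special_hom_point:
  assumes "is_algebra ar A I" and "special_hom ar X \<sigma>" and "\<mu> \<in> X \<rightarrow>\<^sub>E A"
  shows "\<forall>v. eval I \<mu> (\<sigma> v) \<in> A" and "\<forall>x\<in>X. eval I \<mu> (\<sigma> x) = \<mu> x"
proof -
  have "\<forall>x\<in>X. \<mu> x \<in> A" using assms(3) by auto
  with assms(2) show "\<forall>v. eval I \<mu> (\<sigma> v) \<in> A"
    using eval_closed[OF assms(1)] by (metis special_hom_def)
  show "\<forall>x\<in>X. eval I \<mu> (\<sigma> x) = \<mu> x" using assms(2) by (simp add: special_hom_def)
qed

lemma sstar_in_LKer_iff:
  assumes "is_algebra ar A I" and "special_hom ar X \<sigma>" and "wf_fm ar u"
    and "\<mu> \<in> X \<rightarrow>\<^sub>E A"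
  shows "sstar \<sigma> u \<in> LKer ar A I X \<mu> \<longleftrightarrow> sat A I (\<lambda>v. eval I \<mu> (\<sigma> v)) u"
  using assms special_hom_point(1)[OF assms(1,2,4)]
  by (simp add: LKer_def ValX_def sstar_def Val0_def)

lemma Tp_iff_sstar_in_LKer:
  assumes "is_algebra ar A I" and "special_hom ar X \<sigma>" and "X_special ar X u"
    and "\<mu> \<in> X \<rightarrow>\<^sub>E A"
  shows "u \<in> Tp ar A I X \<mu> \<longleftrightarrow> sstar \<sigma> u \<in> LKer ar A I X \<mu>"
proof -
  have "wf_fm ar u" using assms(3) by (simp add: X_special_def)
  then show ?thesis
    using Tp_iff_sat_extension[OF assms(3) special_hom_point[OF assms(1,2,4)]]
      sstar_in_LKer_iff[OF assms(1,2) _ assms(4)]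
    by simp
qed

theorem theorem3p12:
  fixes ar :: "'f \<Rightarrow> nat"
    and E :: "(('f,'v) trm \<times> ('f,'v) trm) set"
    and A :: "'a set" and I :: "'f \<Rightarrow> 'a list \<Rightarrow> 'a"
    and X :: "'v set" and \<sigma> :: "'v \<Rightarrow> ('f,'v) trm"
    and T :: "('f,'v) fm set"
  assumes "infinite (UNIV :: 'v set)"
    and "identities ar E"
    and "in_variety ar E A I"
    and "finite X"
    and "special_hom ar X \<sigma>"
    and "X_type ar A I X T"
  shows "L0_closure ar A I X T = L_closure ar A I X (sstar \<sigma> ` T)"
proof -
  have alg: "is_algebra ar A I" using assms(3) by (simp add: in_variety_def)
  have "\<And>u. u \<in> T \<Longrightarrow> X_special ar X u" using assms(6) by (simp add: X_type_def)
  with Tp_iff_sstar_in_LKer[OF alg assms(5)]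
  have "\<And>\<mu> u. \<mu> \<in> X \<rightarrow>\<^sub>E A \<Longrightarrow> u \<in> T \<Longrightarrow> u \<in> Tp ar A I X \<mu> \<longleftrightarrow> sstar \<sigma> u \<in> LKer ar A I X \<mu>"
    by blast
  then show ?thesis unfolding L0_closure_def L_closure_def by blast
qed

end
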